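(* Let $\alpha\in(0,1)$ and let $\phi:[0,1]\to[0,\infty)$ be twice continuously differentiable on $(0,1]$ with finite constants $W>0$, $c$, $c'$ such that $(2-\alpha)Wp^{\alpha-2}+c'\le|\phi^{(2)}(p)|\le(2-\alpha)Wp^{\alpha-2}+c$ for all $p\in(0,1]$. Then for $\Delta\in(0,1]$ and positive integers $L$, $$E_L(\phi,[0,\Delta])\lesssim\Big(\frac{\Delta}{L^2}\Big)^{\alpha}.$$
   Context: $E_L(\phi,I)=\inf_{q}\sup_{x\in I}|\phi(x)-q(x)|$, the infimum over all real polynomials $q$ of degree at most $L$. $a\lesssim b$ means $a\le Cb$ for a positive constant $C$ not depending on $L,\Delta$ (possibly on $\phi,\alpha$). *)

theory Defs
  imports "HOL-Analysis.Analysis" "HOL-Computational_Algebra.Polynomial"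
begin

definition best_approx_err :: "nat \<Rightarrow> (real \<Rightarrow> real) \<Rightarrow> real set \<Rightarrow> real" where
  "best_approx_err L \<phi> I =
     (INF q \<in> {q :: real poly. degree q \<le> L}. SUP x \<in> I. \<bar>\<phi> x - poly q x\<bar>)"

end

theory Submission
  imports Defs
begin

text \<open>
  Substituting x = \<Delta>(1 - cos \<theta>)/2 turns approximation of \<phi> on [0, \<Delta>] by polynomials of
  degree L into approximation of the even function F \<theta> = \<phi>(\<Delta>(1 - cos \<theta>)/2) by polynomials
  of degree L in cos \<theta>. The bound |\<phi>''(p)| \<le> A p^(\<alpha>-2) makes \<phi> \<alpha>-Hoelder with some
  constant K. For m = L div 4 and \<sigma> = \<Delta>/(4m^2), moving the argument of F inward by \<sigma> yields a
  C^2 function G with |F - G| \<le> K \<sigma>^\<alpha> and |G'|, |G''| = O(\<Delta> \<sigma>^(\<alpha>-1)), hence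
    |F(\<theta> + u) - F \<theta> - G'(\<theta>) sin u| \<le> 2K \<sigma>^\<alpha> + O(\<Delta> \<sigma>^(\<alpha>-1)) sin^2(u/2).
  Averaging against the Jackson kernel |\<Sum>k<m. e^(ikv)|^4 sampled at 4m equidistant nodes
  annihilates the term G'(\<theta>) sin u and turns sin^2(u/2) into a factor O(1/m^2). Since
  \<Delta> = 4m^2 \<sigma>, this gives a cosine polynomial of degree 4(m - 1) \<le> L within O(\<sigma>^\<alpha>) of F,
  and \<sigma>^\<alpha> = O((\<Delta>/L^2)^\<alpha>).
\<close>

text \<open>\<open>pCons 0 Q\<close> has the degree of the term \<open>sin t * poly Q (cos t)\<close>: one more than \<open>Q\<close>, or 0 if \<open>Q = 0\<close>.\<close>
definition trig_poly :: "nat \<Rightarrow> (real \<Rightarrow> real) \<Rightarrow> bool" where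
  "trig_poly d g \<longleftrightarrow> (\<exists>P Q. degree P \<le> d \<and> degree (pCons 0 Q) \<le> d \<and>
     (\<forall>t. g t = poly P (cos t) + sin t * poly Q (cos t)))"

lemma trig_polyE:
  assumes "trig_poly d g"
  obtains P Q where "degree P \<le> d" "degree (pCons 0 Q) \<le> d"
    "\<And>t. g t = poly P (cos t) + sin t * poly Q (cos t)"
  using assms unfolding trig_poly_def by blast

lemma trig_polyI:
  assumes "degree P \<le> d" "degree (pCons 0 Q) \<le> d"
    "\<And>t. g t = poly P (cos t) + sin t * poly Q (cos t)"
  shows "trig_poly d g"
  using assms unfolding trig_poly_def by blast

lemma trig_poly_const: "trig_poly d (\<lambda>_. c)"
  by (rule trig_polyI[of "[:c:]" _ 0]) auto

lemma trig_poly_mono: "trig_poly d g \<Longrightarrow> d \<le> e \<Longrightarrow> trig_poly e g"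
  unfolding trig_poly_def by (meson order_trans)

lemma trig_poly_add:
  assumes "trig_poly d g" "trig_poly d h"
  shows "trig_poly d (\<lambda>t. g t + h t)"
proof -
  obtain P1 Q1 where 1: "degree P1 \<le> d" "degree (pCons 0 Q1) \<le> d"
    "\<And>t. g t = poly P1 (cos t) + sin t * poly Q1 (cos t)" using assms(1) by (elim trig_polyE) blast
  obtain P2 Q2 where 2: "degree P2 \<le> d" "degree (pCons 0 Q2) \<le> d"
    "\<And>t. h t = poly P2 (cos t) + sin t * poly Q2 (cos t)" using assms(2) by (elim trig_polyE) blast
  show ?thesis
  proof (rule trig_polyI[of "P1 + P2" _ "Q1 + Q2"])
    show "degree (P1 + P2) \<le> d" using 1 2 by (intro degree_add_le)
    show "degree (pCons 0 (Q1 + Q2)) \<le> d"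
      using 1 2 degree_add_le[of "pCons 0 Q1" d "pCons 0 Q2"] by simp
  qed (simp add: 1 2 algebra_simps)
qed

lemma trig_poly_cmult:
  assumes "trig_poly d g"
  shows "trig_poly d (\<lambda>t. c * g t)"
proof -
  obtain P Q where PQ: "degree P \<le> d" "degree (pCons 0 Q) \<le> d"
    "\<And>t. g t = poly P (cos t) + sin t * poly Q (cos t)" using assms by (elim trig_polyE) blast
  show ?thesis
  proof (rule trig_polyI[of "smult c P" _ "smult c Q"])
    show "degree (smult c P) \<le> d" using PQ by (meson degree_smult_le order_trans)
    show "degree (pCons 0 (smult c Q)) \<le> d"
      using PQ degree_smult_le[of c "pCons 0 Q"] by (simp del: degree_smult_eq)
  qed (simp add: PQ algebra_simps)
qed

lemma trig_poly_diff:
  assumes "trig_poly d g" "trig_poly d h"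
  shows "trig_poly d (\<lambda>t. g t - h t)"
  using trig_poly_add[OF assms(1) trig_poly_cmult[OF assms(2), of "- 1"]] by simp

lemma trig_poly_mult:
  assumes "trig_poly d g" "trig_poly e h"
  shows "trig_poly (d + e) (\<lambda>t. g t * h t)"
proof -
  obtain P1 Q1 where 1: "degree P1 \<le> d" "degree (pCons 0 Q1) \<le> d"
    "\<And>t. g t = poly P1 (cos t) + sin t * poly Q1 (cos t)" using assms(1) by (elim trig_polyE) blast
  obtain P2 Q2 where 2: "degree P2 \<le> e" "degree (pCons 0 Q2) \<le> e"
    "\<And>t. h t = poly P2 (cos t) + sin t * poly Q2 (cos t)" using assms(2) by (elim trig_polyE) blast
  have deg_prod: "degree (p * q) \<le> d + e" if "degree p \<le> d" "degree q \<le> e" for p q :: "real poly"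
    using that degree_mult_le[of p q] by linarith
  let ?X1 = "pCons 0 Q1" and ?X2 = "pCons 0 Q2"
  \<comment> \<open>\<open>sin t ^ 2 = 1 - cos t ^ 2\<close>, and \<open>pCons 0\<close> multiplies by the variable\<close>
  show ?thesis
  proof (rule trig_polyI[of "P1 * P2 + Q1 * Q2 - ?X1 * ?X2" _ "P1 * Q2 + Q1 * P2"])
    have "degree Q1 \<le> d" "degree Q2 \<le> e"
      using 1(2) 2(2) by (cases "Q1 = 0"; cases "Q2 = 0"; simp)+
    then have "degree (Q1 * Q2) \<le> d + e" by (rule deg_prod)
    then show "degree (P1 * P2 + Q1 * Q2 - ?X1 * ?X2) \<le> d + e"
      using 1 2 deg_prod by (meson degree_add_le degree_diff_le)
    have "pCons 0 (P1 * Q2 + Q1 * P2) = P1 * ?X2 + ?X1 * P2"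
      by (simp add: algebra_simps)
    then show "degree (pCons 0 (P1 * Q2 + Q1 * P2)) \<le> d + e"
      using 1 2 deg_prod by (metis degree_add_le)
    fix t :: real
    show "g t * h t =
        poly (P1 * P2 + Q1 * Q2 - ?X1 * ?X2) (cos t) + sin t * poly (P1 * Q2 + Q1 * P2) (cos t)"
      by (simp add: 1 2 algebra_simps)
        (simp add: mult.assoc[symmetric] distrib_right[symmetric] sin_cos_squared_add3)
  qed
qed

lemma trig_poly_sum:
  "finite S \<Longrightarrow> (\<And>i. i \<in> S \<Longrightarrow> trig_poly d (g i)) \<Longrightarrow> trig_poly d (\<lambda>t. \<Sum>i\<in>S. g i t)"
proof (induction S rule: finite_induct)
  case empty
  then show ?case using trig_poly_const[of d 0] by simp
next
  case (insert x F)
  then show ?case using trig_poly_add[of d "g x" "\<lambda>t. \<Sum>i\<in>F. g i t"] by simp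
qed

lemma trig_poly_cos_sin_multiple:
  "trig_poly k (\<lambda>t. cos (real k * t)) \<and> trig_poly k (\<lambda>t. sin (real k * t))"
proof (induction k)
  case 0
  then show ?case using trig_poly_const[of 0 1] trig_poly_const[of 0 0] by simp
next
  case (Suc k)
  have cos: "trig_poly 1 cos" by (rule trig_polyI[of "[:0,1:]" _ 0]) auto
  have sin: "trig_poly 1 sin" by (rule trig_polyI[of 0 _ 1]) auto
  have "trig_poly (k + 1) (\<lambda>t. cos (real k * t) * cos t)"
    "trig_poly (k + 1) (\<lambda>t. sin (real k * t) * sin t)"
    "trig_poly (k + 1) (\<lambda>t. sin (real k * t) * cos t)"
    "trig_poly (k + 1) (\<lambda>t. cos (real k * t) * sin t)"
    using Suc.IH trig_poly_mult cos sin by blast+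
  then have "trig_poly (k + 1) (\<lambda>t. cos (real k * t) * cos t - sin (real k * t) * sin t)"
    "trig_poly (k + 1) (\<lambda>t. sin (real k * t) * cos t + cos (real k * t) * sin t)"
    by (auto intro: trig_poly_add trig_poly_diff)
  moreover have "cos (real (Suc k) * t) = cos (real k * t) * cos t - sin (real k * t) * sin t"
    and "sin (real (Suc k) * t) = sin (real k * t) * cos t + cos (real k * t) * sin t" for t
    by (simp_all add: distrib_right cos_add sin_add)
  ultimately show ?case by simp
qed

lemma trig_poly_cos_multiple_shift: "trig_poly k (\<lambda>t. cos (real k * (t - a)))"
proof -
  have "cos (real k * (t - a)) =
      cos (real k * a) * cos (real k * t) + sin (real k * a) * sin (real k * t)" for t
    by (simp add: right_diff_distrib cos_diff)
  then show ?thesis using trig_poly_cos_sin_multiple trig_poly_add trig_poly_cmult by presburger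
qed

lemma trig_poly_sin_multiple_shift: "trig_poly k (\<lambda>t. sin (real k * (t - a)))"
proof -
  have "sin (real k * (t - a)) =
      cos (real k * a) * sin (real k * t) + (- sin (real k * a)) * cos (real k * t)" for t
    by (simp add: right_diff_distrib sin_diff)
  then show ?thesis using trig_poly_cos_sin_multiple trig_poly_add trig_poly_cmult by presburger
qed

lemma trig_poly_even_part_approx:
  assumes J: "trig_poly d J" and F_even: "\<And>t. F (- t) = F t"
    and err: "\<And>t. \<bar>J t - F t\<bar> \<le> E"
  shows "\<exists>P. degree P \<le> d \<and> (\<forall>t. \<bar>poly P (cos t) - F t\<bar> \<le> E)"
proof -
  obtain P Q where PQ: "degree P \<le> d" "\<And>t. J t = poly P (cos t) + sin t * poly Q (cos t)"
    using J by (elim trig_polyE) blast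
  have "\<bar>poly P (cos t) - F t\<bar> \<le> E" for t
  proof -
    have "poly P (cos t) - F t = ((J t - F t) + (J (- t) - F (- t))) / 2"
      using PQ(2) F_even by simp
    then show ?thesis using err[of t] err[of "- t"] by simp
  qed
  then show ?thesis using PQ(1) by blast
qed

definition node :: "nat \<Rightarrow> nat \<Rightarrow> real" where
  "node N j = 2 * pi * real j / real N"

definition dirichlet :: "nat \<Rightarrow> real \<Rightarrow> complex" where
  "dirichlet m v = (\<Sum>k<m. cis (real k * v))"

definition jackson_kernel :: "nat \<Rightarrow> real \<Rightarrow> real" where
  "jackson_kernel m v = cmod (dirichlet m v) ^ 4"

lemma cis_2pi_fraction_neq_1:
  assumes "s \<noteq> 0" "\<bar>s\<bar> < real N"
  shows "cis (- 2 * pi * s / real N) \<noteq> 1"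
proof
  assume "cis (- 2 * pi * s / real N) = 1"
  then have "cos (- 2 * pi * s / real N) = 1" by (simp add: complex_eq_iff)
  then obtain n :: int where n: "- 2 * pi * s / real N = of_int n * 2 * pi"
    by (subst (asm) cos_one_2pi_int) blast
  then have "pi * (- s) = pi * (of_int n * real N)" using assms by (simp add: field_simps)
  then have "- s = of_int n * real N" by (metis mult_left_cancel pi_neq_zero)
  then have "\<bar>s\<bar> = \<bar>of_int n\<bar> * real N" by (metis abs_minus_cancel abs_mult abs_of_nat)
  moreover have "n \<noteq> 0" using n assms by auto
  then have "1 \<le> \<bar>real_of_int n\<bar>" by linarith
  ultimately have "real N \<le> \<bar>s\<bar>" using mult_right_mono[of 1 "\<bar>real_of_int n\<bar>" "real N"] by simp
  then show False using assms by simp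
qed

lemma sum_cis_nodes:
  fixes s :: real
  assumes N: "0 < N" and sI: "s \<in> \<int>" and s: "\<bar>s\<bar> < real N"
  shows "(\<Sum>j<N. cis (s * (\<theta> - node N j))) = (if s = 0 then of_nat N else 0)"
proof (cases "s = 0")
  case True then show ?thesis by simp
next
  case False
  obtain k :: int where sk: "s = of_int k" using sI Ints_cases by blast
  define z where "z = cis (- 2 * pi * s / real N)"
  have e: "cis (s * (\<theta> - node N j)) = cis (s * \<theta>) * z ^ j" for j
    unfolding z_def Complex.DeMoivre cis_mult node_def
    by (rule arg_cong[where f = cis]) (simp add: field_simps)
  have zN: "z ^ N = 1"
  proof -
    have "z ^ N = cis (2 * pi * of_int (- k))" unfolding z_def Complex.DeMoivre using N
      by (simp add: sk)
    also have "\<dots> = 1" by (rule cis_multiple_2pi) simp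
    finally show ?thesis .
  qed
  have z1: "z \<noteq> 1" unfolding z_def using False s by (rule cis_2pi_fraction_neq_1)
  have "(\<Sum>j<N. cis (s * (\<theta> - node N j))) = cis (s * \<theta>) * (\<Sum>j<N. z ^ j)"
    unfolding e by (simp add: sum_distrib_left)
  also have "(\<Sum>j<N. z ^ j) = 0" using sum_gp_strict[of z N] zN z1 by simp
  finally show ?thesis using False by simp
qed

lemma sum_cis_mult_sum_cis:
  "(\<Sum>x\<in>X. cis (f x * v)) * (\<Sum>y\<in>Y. cis (g y * v)) = (\<Sum>z\<in>X \<times> Y. cis ((f (fst z) + g (snd z)) * v))"
  by (simp add: sum_product sum.cartesian_product cis_mult distrib_right case_prod_beta)

definition jackson_indices :: "nat \<Rightarrow> ((nat \<times> nat) \<times> (nat \<times> nat)) set" where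
  "jackson_indices m = ({..<m} \<times> {..<m}) \<times> ({..<m} \<times> {..<m})"
definition jackson_freq :: "(nat \<times> nat) \<times> (nat \<times> nat) \<Rightarrow> real" where
  "jackson_freq z = (real (fst (fst z)) + real (snd (fst z))) + (- real (fst (snd z)) + - real (snd (snd z)))"

lemma dirichlet_cnj: "cnj (dirichlet m v) = (\<Sum>k<m. cis (- real k * v))"
  unfolding dirichlet_def by (simp add: cis_cnj)

lemma jackson_kernel_eq_sum_cis:
  "complex_of_real (jackson_kernel m v) = (\<Sum>z\<in>jackson_indices m. cis (jackson_freq z * v))"
proof -
  have "complex_of_real (jackson_kernel m v) = complex_of_real ((cmod (dirichlet m v))^2) ^ 2"
    unfolding jackson_kernel_def by simp
  also have "\<dots> = (dirichlet m v * dirichlet m v) * (cnj (dirichlet m v) * cnj (dirichlet m v))"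
    unfolding complex_norm_square by (simp add: power2_eq_square algebra_simps)
  also have "\<dots> = (\<Sum>z\<in>jackson_indices m. cis (jackson_freq z * v))"
    unfolding dirichlet_cnj unfolding dirichlet_def sum_cis_mult_sum_cis jackson_indices_def jackson_freq_def by simp
  finally show ?thesis .
qed

lemma jackson_freq_int_bounded:
  assumes "z \<in> jackson_indices m"
  shows "jackson_freq z \<in> \<int>" "\<bar>jackson_freq z\<bar> \<le> 2 * real m - 2"
proof -
  show "jackson_freq z \<in> \<int>" unfolding jackson_freq_def by (intro Ints_add Ints_minus Ints_of_nat)
  have "real a \<le> real m - 1" if "a < m" for a
    using that by (simp add: nat_less_real_le)
  then show "\<bar>jackson_freq z\<bar> \<le> 2 * real m - 2"
    using assms unfolding jackson_indices_def jackson_freq_def by (force simp: abs_le_iff)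
qed

lemma sum_jackson_kernel_nodes:
  assumes m: "0 < m" and N: "2 * m \<le> N"
  shows "(\<Sum>j<N. jackson_kernel m (\<theta> - node N j)) =
    (\<Sum>z\<in>jackson_indices m. if jackson_freq z = 0 then real N else 0)"
proof -
  have N0: "0 < N" using m N by linarith
  have "complex_of_real (\<Sum>j<N. jackson_kernel m (\<theta> - node N j)) = (\<Sum>j<N. \<Sum>z\<in>jackson_indices m. cis (jackson_freq z * (\<theta> - node N j)))"
    by (simp add: jackson_kernel_eq_sum_cis)
  also have "\<dots> = (\<Sum>z\<in>jackson_indices m. \<Sum>j<N. cis (jackson_freq z * (\<theta> - node N j)))" by (rule sum.swap)
  also have "\<dots> = (\<Sum>z\<in>jackson_indices m. if jackson_freq z = 0 then of_nat N else 0)"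
  proof (rule sum.cong[OF refl])
    fix z assume z: "z \<in> jackson_indices m"
    have "\<bar>jackson_freq z\<bar> < real N" using jackson_freq_int_bounded(2)[OF z] N by linarith
    then show "(\<Sum>j<N. cis (jackson_freq z * (\<theta> - node N j))) = (if jackson_freq z = 0 then of_nat N else 0)"
      by (rule sum_cis_nodes[OF N0 jackson_freq_int_bounded(1)[OF z]])
  qed
  also have "\<dots> = complex_of_real (\<Sum>z\<in>jackson_indices m. if jackson_freq z = 0 then real N else 0)"
    by (auto simp: of_real_sum intro!: sum.cong)
  finally show ?thesis using of_real_eq_iff by blast
qed

lemma sum_jackson_kernel_nodes_sin:
  assumes m: "0 < m" and N: "2 * m \<le> N"
  shows "(\<Sum>j<N. jackson_kernel m (\<theta> - node N j) * sin (\<theta> - node N j)) = 0"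
proof -
  have N0: "0 < N" using m N by linarith
  have e: "complex_of_real (jackson_kernel m v) * cis v = (\<Sum>z\<in>jackson_indices m. cis ((jackson_freq z + 1) * v))" for v
    unfolding jackson_kernel_eq_sum_cis by (simp add: sum_distrib_right cis_mult distrib_right)
  have "(\<Sum>j<N. complex_of_real (jackson_kernel m (\<theta> - node N j)) * cis (\<theta> - node N j))
      = (\<Sum>j<N. \<Sum>z\<in>jackson_indices m. cis ((jackson_freq z + 1) * (\<theta> - node N j)))" by (simp add: e)
  also have "\<dots> = (\<Sum>z\<in>jackson_indices m. \<Sum>j<N. cis ((jackson_freq z + 1) * (\<theta> - node N j)))" by (rule sum.swap)
  also have "\<dots> = (\<Sum>z\<in>jackson_indices m. if jackson_freq z + 1 = 0 then of_nat N else 0)"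
  proof (rule sum.cong[OF refl])
    fix z assume z: "z \<in> jackson_indices m"
    have "jackson_freq z + 1 \<in> \<int>" using jackson_freq_int_bounded(1)[OF z] by simp
    moreover have "\<bar>jackson_freq z + 1\<bar> < real N" using jackson_freq_int_bounded(2)[OF z] N by linarith
    ultimately show "(\<Sum>j<N. cis ((jackson_freq z + 1) * (\<theta> - node N j))) = (if jackson_freq z + 1 = 0 then of_nat N else 0)"
      by (rule sum_cis_nodes[OF N0])
  qed
  finally have "Im (\<Sum>j<N. complex_of_real (jackson_kernel m (\<theta> - node N j)) * cis (\<theta> - node N j)) = 0"
    by (simp add: if_distrib cong: if_cong)
  then show ?thesis by simp
qed

lemma sum_dirichlet_sq_nodes:
  assumes m: "0 < m" and N: "m \<le> N"
  shows "(\<Sum>j<N. cmod (dirichlet m (\<theta> - node N j)) ^ 2) = real N * real m"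
proof -
  have N0: "0 < N" using m N by linarith
  have e: "complex_of_real (cmod (dirichlet m v) ^ 2) = (\<Sum>z\<in>{..<m}\<times>{..<m}. cis ((real (fst z) + - real (snd z)) * v))" for v
    unfolding complex_norm_square dirichlet_cnj unfolding dirichlet_def sum_cis_mult_sum_cis by simp
  have "complex_of_real (\<Sum>j<N. cmod (dirichlet m (\<theta> - node N j)) ^ 2)
      = (\<Sum>j<N. \<Sum>z\<in>{..<m}\<times>{..<m}. cis ((real (fst z) + - real (snd z)) * (\<theta> - node N j)))" by (simp only: of_real_sum e)
  also have "\<dots> = (\<Sum>z\<in>{..<m}\<times>{..<m}. \<Sum>j<N. cis ((real (fst z) + - real (snd z)) * (\<theta> - node N j)))"
    by (rule sum.swap)
  also have "\<dots> = (\<Sum>z\<in>{..<m}\<times>{..<m}. if fst z = snd z then of_nat N else 0)"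
  proof (rule sum.cong[OF refl])
    fix z assume z: "z \<in> {..<m}\<times>{..<m}"
    have "real (fst z) + - real (snd z) \<in> \<int>" by (intro Ints_add Ints_minus Ints_of_nat)
    moreover have "\<bar>real (fst z) + - real (snd z)\<bar> < real N" using z N by auto
    ultimately have "(\<Sum>j<N. cis ((real (fst z) + - real (snd z)) * (\<theta> - node N j)))
       = (if real (fst z) + - real (snd z) = 0 then of_nat N else 0)"
      by (rule sum_cis_nodes[OF N0])
    then show "(\<Sum>j<N. cis ((real (fst z) + - real (snd z)) * (\<theta> - node N j))) = (if fst z = snd z then of_nat N else 0)"
      by simp
  qed
  also have "\<dots> = (\<Sum>(a,b)\<in>{..<m}\<times>{..<m}. if a = b then of_nat N else 0)"
    by (simp add: case_prod_beta)
  also have "\<dots> = (\<Sum>a<m. \<Sum>b<m. if a = b then of_nat N else 0)"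
    by (rule sum.cartesian_product[symmetric])
  also have "\<dots> = (\<Sum>a<m. of_nat N)"
    by (intro sum.cong refl) (simp add: sum.delta)
  also have "\<dots> = complex_of_real (real N * real m)" by simp
  finally show ?thesis using of_real_eq_iff by blast
qed

lemma jackson_kernel_nonneg: "0 \<le> jackson_kernel m v"
  unfolding jackson_kernel_def by simp

lemma jackson_kernel_0: "jackson_kernel m 0 = real m ^ 4"
  unfolding jackson_kernel_def dirichlet_def by simp

lemma dirichlet_mult_cis_minus_1: "dirichlet m v * (cis v - 1) = cis (real m * v) - 1"
proof -
  have "dirichlet m v = (\<Sum>k<m. cis v ^ k)" unfolding dirichlet_def Complex.DeMoivre by simp
  then show ?thesis using power_diff_1_eq[of "cis v" m] by (simp add: Complex.DeMoivre mult.commute)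
qed

lemma cmod_cis_minus_1_sq: "cmod (cis v - 1) ^ 2 = 4 * sin (v / 2) ^ 2"
proof -
  have "cmod (cis v - 1) ^ 2 = (cos v - 1)^2 + sin v ^ 2" by (simp add: cmod_power2)
  also have "\<dots> = 2 - 2 * cos v" using sin_cos_squared_add[of v] by (simp add: power2_eq_square algebra_simps)
  also have "cos v = 1 - 2 * sin (v/2) ^ 2" using cos_double_sin[of "v/2"] by simp
  finally show ?thesis by simp
qed

lemma jackson_kernel_mult_sin_half_sq:
  "jackson_kernel m v * sin (v / 2) ^ 2 \<le> cmod (dirichlet m v) ^ 2"
proof -
  have "cmod (dirichlet m v) ^ 2 * (4 * sin (v / 2) ^ 2) = cmod (dirichlet m v * (cis v - 1)) ^ 2"
    by (simp add: norm_mult power_mult_distrib cmod_cis_minus_1_sq)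
  also have "\<dots> = cmod (cis (real m * v) - 1) ^ 2" by (simp add: dirichlet_mult_cis_minus_1)
  also have "\<dots> \<le> 2 ^ 2"
  proof -
    have "cmod (cis (real m * v) - 1) \<le> 2"
      using norm_triangle_ineq4[of "cis (real m * v)" 1] by simp
    then show ?thesis by (intro power_mono) auto
  qed
  finally have a: "cmod (dirichlet m v) ^ 2 * sin (v / 2) ^ 2 \<le> 1" by simp
  have "jackson_kernel m v * sin (v / 2) ^ 2 = cmod (dirichlet m v) ^ 2 * (cmod (dirichlet m v) ^ 2 * sin (v / 2) ^ 2)"
    unfolding jackson_kernel_def by (simp add: power_mult[symmetric] mult.assoc[symmetric] power_add[symmetric])
  also have "\<dots> \<le> cmod (dirichlet m v) ^ 2 * 1" by (rule mult_left_mono[OF a]) simp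
  finally show ?thesis by simp
qed

lemma jackson_kernel_eq_cos_sin_sums:
  "jackson_kernel m v = ((\<Sum>k<m. cos (real k * v))^2 + (\<Sum>k<m. sin (real k * v))^2)^2"
proof -
  have a: "cmod (dirichlet m v) ^ 2 = (\<Sum>k<m. cos (real k * v))^2 + (\<Sum>k<m. sin (real k * v))^2"
    unfolding cmod_power2 dirichlet_def by simp
  have "jackson_kernel m v = (cmod (dirichlet m v) ^ 2) ^ 2" unfolding jackson_kernel_def by (simp add: power4_eq_xxxx power2_eq_square mult.assoc)
  then show ?thesis using a by simp
qed

lemma trig_poly_jackson_kernel_shift: "trig_poly (4 * (m - 1)) (\<lambda>\<theta>. jackson_kernel m (\<theta> - a))"
proof -
  define S1 where "S1 \<theta> = (\<Sum>k<m. cos (real k * (\<theta> - a)))" for \<theta>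
  define S2 where "S2 \<theta> = (\<Sum>k<m. sin (real k * (\<theta> - a)))" for \<theta>
  have "trig_poly (m - 1) S1" unfolding S1_def[abs_def]
    by (intro trig_poly_sum) (auto intro: trig_poly_mono[OF trig_poly_cos_multiple_shift])
  moreover have "trig_poly (m - 1) S2" unfolding S2_def[abs_def]
    by (intro trig_poly_sum) (auto intro: trig_poly_mono[OF trig_poly_sin_multiple_shift])
  ultimately have "trig_poly ((m - 1) + (m - 1)) (\<lambda>\<theta>. S1 \<theta> * S1 \<theta> + S2 \<theta> * S2 \<theta>)"
    by (intro trig_poly_add trig_poly_mult)
  then have "trig_poly (((m - 1) + (m - 1)) + ((m - 1) + (m - 1)))
      (\<lambda>\<theta>. (S1 \<theta> * S1 \<theta> + S2 \<theta> * S2 \<theta>) * (S1 \<theta> * S1 \<theta> + S2 \<theta> * S2 \<theta>))"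
    by (intro trig_poly_mult)
  moreover have "jackson_kernel m (\<theta> - a) = (S1 \<theta> * S1 \<theta> + S2 \<theta> * S2 \<theta>) * (S1 \<theta> * S1 \<theta> + S2 \<theta> * S2 \<theta>)" for \<theta>
    by (simp add: jackson_kernel_eq_cos_sin_sums S1_def S2_def power2_eq_square)
  ultimately show ?thesis by (auto elim: trig_poly_mono)
qed

definition jackson_norm :: "nat \<Rightarrow> real" where
  "jackson_norm m = (\<Sum>j<4 * m. jackson_kernel m (- node (4 * m) j))"

text \<open>
  Sampling at 4m nodes loses nothing: the kernel and its product with \<open>sin\<close> have all
  frequencies below 2m, where \<open>sum_cis_nodes\<close> applies.
\<close>
definition jackson_op :: "nat \<Rightarrow> (real \<Rightarrow> real) \<Rightarrow> real \<Rightarrow> real" where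
  "jackson_op m F \<theta> =
     (\<Sum>j<4 * m. F (node (4 * m) j) * jackson_kernel m (\<theta> - node (4 * m) j)) / jackson_norm m"

lemma sum_jackson_kernel_nodes_eq_norm:
  assumes "0 < m"
  shows "(\<Sum>j<4 * m. jackson_kernel m (\<theta> - node (4 * m) j)) = jackson_norm m"
  using sum_jackson_kernel_nodes[OF assms, of "4 * m" \<theta>] sum_jackson_kernel_nodes[OF assms, of "4 * m" 0]
  unfolding jackson_norm_def by simp

lemma jackson_norm_ge:
  assumes "0 < m"
  shows "real m ^ 4 \<le> jackson_norm m"
proof -
  have "jackson_kernel m (- node (4 * m) 0) \<le> jackson_norm m"
    unfolding jackson_norm_def by (rule member_le_sum) (use assms jackson_kernel_nonneg in auto)
  then show ?thesis by (simp add: node_def jackson_kernel_0)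
qed

lemma jackson_norm_pos: "0 < m \<Longrightarrow> 0 < jackson_norm m"
  by (rule less_le_trans[OF _ jackson_norm_ge]) auto

lemma trig_poly_jackson_op: "trig_poly (4 * (m - 1)) (jackson_op m F)"
proof -
  have "jackson_op m F = (\<lambda>\<theta>. \<Sum>j<4 * m.
      F (node (4 * m) j) / jackson_norm m * jackson_kernel m (\<theta> - node (4 * m) j))"
    by (auto simp: jackson_op_def sum_divide_distrib)
  then show ?thesis
    by (simp only:) (intro trig_poly_sum trig_poly_cmult trig_poly_jackson_kernel_shift finite_lessThan)
qed

lemma jackson_op_minus_eq:
  assumes "0 < m"
  shows "jackson_op m F \<theta> - F \<theta> = (\<Sum>j<4 * m. jackson_kernel m (\<theta> - node (4 * m) j) *
           (F (node (4 * m) j) - F \<theta> - a * sin (node (4 * m) j - \<theta>))) / jackson_norm m"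
proof -
  let ?K = "\<lambda>j. jackson_kernel m (\<theta> - node (4 * m) j)"
  have "(\<Sum>j<4 * m. ?K j * (F (node (4 * m) j) - F \<theta> - a * sin (node (4 * m) j - \<theta>)))
      = (\<Sum>j<4 * m. F (node (4 * m) j) * ?K j) - F \<theta> * (\<Sum>j<4 * m. ?K j)
        + a * (\<Sum>j<4 * m. ?K j * sin (\<theta> - node (4 * m) j))"
    by (simp add: sum_subtractf sum.distrib sum_distrib_left algebra_simps sin_diff)
  also have "\<dots> = (\<Sum>j<4 * m. F (node (4 * m) j) * ?K j) - F \<theta> * jackson_norm m"
    using sum_jackson_kernel_nodes_eq_norm[OF assms] sum_jackson_kernel_nodes_sin[OF assms, of "4 * m"]
    by simp
  finally show ?thesis using jackson_norm_pos[OF assms] by (simp add: jackson_op_def field_simps)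
qed

lemma jackson_op_error:
  assumes m: "0 < m" and E1: "0 \<le> E1"
    and expansion: "\<And>u. \<bar>F (\<theta> + u) - F \<theta> - a * sin u\<bar> \<le> E0 + E1 * sin (u / 2) ^ 2"
  shows "\<bar>jackson_op m F \<theta> - F \<theta>\<bar> \<le> E0 + 4 * E1 / real m ^ 2"
proof -
  define N where "N = 4 * m"
  define T where "T = jackson_norm m"
  let ?K = "\<lambda>j. jackson_kernel m (\<theta> - node N j)"
  have T: "real m ^ 4 \<le> T" "0 < T"
    using jackson_norm_ge[OF m] jackson_norm_pos[OF m] unfolding T_def by auto
  have term_bound: "\<bar>?K j * (F (node N j) - F \<theta> - a * sin (node N j - \<theta>))\<bar>
      \<le> ?K j * E0 + E1 * cmod (dirichlet m (\<theta> - node N j)) ^ 2" for j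
  proof -
    have "sin ((node N j - \<theta>) / 2) ^ 2 = sin ((\<theta> - node N j) / 2) ^ 2"
      by (metis minus_diff_eq sin_minus power2_minus minus_divide_left)
    then have "\<bar>F (node N j) - F \<theta> - a * sin (node N j - \<theta>)\<bar> \<le> E0 + E1 * sin ((\<theta> - node N j) / 2) ^ 2"
      using expansion[of "node N j - \<theta>"] by simp
    then have "\<bar>?K j * (F (node N j) - F \<theta> - a * sin (node N j - \<theta>))\<bar>
        \<le> ?K j * (E0 + E1 * sin ((\<theta> - node N j) / 2) ^ 2)"
      unfolding abs_mult abs_of_nonneg[OF jackson_kernel_nonneg]
      by (rule mult_left_mono) (rule jackson_kernel_nonneg)
    also have "\<dots> = ?K j * E0 + E1 * (?K j * sin ((\<theta> - node N j) / 2) ^ 2)"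
      by (simp add: algebra_simps)
    also have "\<dots> \<le> ?K j * E0 + E1 * cmod (dirichlet m (\<theta> - node N j)) ^ 2"
      using jackson_kernel_mult_sin_half_sq E1 by (intro add_left_mono mult_left_mono)
    finally show ?thesis .
  qed
  have "\<bar>jackson_op m F \<theta> - F \<theta>\<bar>
      \<le> (\<Sum>j<N. ?K j * E0 + E1 * cmod (dirichlet m (\<theta> - node N j)) ^ 2) / T"
    unfolding jackson_op_minus_eq[OF m, of F \<theta> a] N_def[symmetric] T_def[symmetric] abs_divide
    using T by (simp add: abs_of_pos) (intro divide_right_mono order_trans[OF sum_abs sum_mono] term_bound; simp)
  also have "\<dots> = E0 + E1 * (real N * real m) / T"
    using T sum_jackson_kernel_nodes_eq_norm[OF m] sum_dirichlet_sq_nodes[OF m, of N]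
    by (simp add: N_def T_def sum.distrib field_simps flip: sum_distrib_right sum_distrib_left)
  also have "E1 * (real N * real m) / T \<le> E1 * (real N * real m) / real m ^ 4"
    using T E1 m by (intro divide_left_mono) auto
  also have "\<dots> = 4 * E1 / real m ^ 2"
    using m by (simp add: N_def power2_eq_square power4_eq_xxxx)
  finally show ?thesis by simp
qed

lemma MVT_between:
  fixes f f' :: "real \<Rightarrow> real"
  assumes d: "\<And>x. DERIV f x :> f' x"
  shows "\<exists>z. \<bar>z - a\<bar> \<le> \<bar>b - a\<bar> \<and> f b - f a = (b - a) * f' z"
proof (cases a b rule: linorder_cases)
  case less
  then obtain z where "a < z" "z < b" "f b - f a = (b - a) * f' z" using MVT2[of a b f f'] d by blast
  then show ?thesis by (intro exI[of _ z]) auto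
next
  case equal then show ?thesis by (intro exI[of _ a]) auto
next
  case greater
  then obtain z where z: "b < z" "z < a" "f a - f b = (a - b) * f' z" using MVT2[of b a f f'] d by blast
  have "(b - a) * f' z = - ((a - b) * f' z)" by (simp add: algebra_simps)
  then show ?thesis using z by (intro exI[of _ z]) auto
qed

lemma abs_diff_le_deriv_bound:
  fixes f f' :: "real \<Rightarrow> real"
  assumes d: "\<And>x. DERIV f x :> f' x" and b: "\<And>x. \<bar>f' x\<bar> \<le> M"
  shows "\<bar>f b - f a\<bar> \<le> M * \<bar>b - a\<bar>"
proof -
  obtain z where "f b - f a = (b - a) * f' z" using MVT_between[OF d] by blast
  then have "\<bar>f b - f a\<bar> = \<bar>b - a\<bar> * \<bar>f' z\<bar>" by (simp add: abs_mult)
  also have "\<dots> \<le> \<bar>b - a\<bar> * M" by (rule mult_left_mono[OF b]) simp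
  finally show ?thesis by (simp add: mult.commute)
qed

lemma taylor_second_order_bound:
  fixes f f1 f2 :: "real \<Rightarrow> real"
  assumes d1: "\<And>x. DERIV f x :> f1 x" and d2: "\<And>x. DERIV f1 x :> f2 x" and b: "\<And>x. \<bar>f2 x\<bar> \<le> M"
  shows "\<bar>f (a + u) - f a - f1 a * u\<bar> \<le> M * u^2"
proof -
  obtain z where z: "\<bar>z - a\<bar> \<le> \<bar>u\<bar>" "f (a+u) - f a = u * f1 z" using MVT_between[OF d1, of a "a+u"] by auto
  have l: "\<bar>f1 z - f1 a\<bar> \<le> M * \<bar>z - a\<bar>" by (rule abs_diff_le_deriv_bound[OF d2 b])
  have M: "M \<ge> 0" using b[of 0] by linarith
  have "\<bar>f (a + u) - f a - f1 a * u\<bar> = \<bar>u\<bar> * \<bar>f1 z - f1 a\<bar>"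
    using z(2) by (simp add: abs_mult[symmetric] algebra_simps)
  also have "\<dots> \<le> \<bar>u\<bar> * (M * \<bar>u\<bar>)"
  proof -
    have "M * \<bar>z - a\<bar> \<le> M * \<bar>u\<bar>" using z(1) M by (rule mult_left_mono)
    then have "\<bar>f1 z - f1 a\<bar> \<le> M * \<bar>u\<bar>" using l by linarith
    then show ?thesis by (rule mult_left_mono) simp
  qed
  also have "\<dots> = M * u^2" by (simp add: power2_eq_square abs_mult_self algebra_simps)
  finally show ?thesis .
qed

lemma abs_one_minus_cos_le: "\<bar>1 - cos z\<bar> \<le> \<bar>z\<bar>" for z :: real
proof -
  have e: "1 - cos z = 2 * sin (z/2) ^ 2" using cos_double_sin[of "z/2"] by simp
  have "sin (z/2) ^ 2 = \<bar>sin (z/2)\<bar> * \<bar>sin (z/2)\<bar>" by (simp add: power2_eq_square)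
  also have "\<dots> \<le> \<bar>sin (z/2)\<bar> * 1" by (intro mult_left_mono abs_sin_le_one) simp
  also have "\<dots> \<le> \<bar>z/2\<bar>" using abs_sin_x_le_abs_x[of "z/2"] by simp
  finally show ?thesis unfolding e by simp
qed

lemma abs_minus_sin_le_sq: "\<bar>u - sin u\<bar> \<le> u^2" for u :: real
proof -
  have d: "\<And>x. DERIV (\<lambda>x. x - sin x) x :> 1 - cos x" by (auto intro!: derivative_eq_intros)
  obtain z where z: "\<bar>z - 0\<bar> \<le> \<bar>u - 0\<bar>" "(u - sin u) - (0 - sin 0) = (u - 0) * (1 - cos z)"
    using MVT_between[OF d, of 0 u] by blast
  have "\<bar>u - sin u\<bar> = \<bar>u\<bar> * \<bar>1 - cos z\<bar>" using z(2) by (simp add: abs_mult)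
  also have "\<dots> \<le> \<bar>u\<bar> * \<bar>u\<bar>" using abs_one_minus_cos_le[of z] z(1) by (intro mult_left_mono) auto
  finally show ?thesis by (simp add: power2_eq_square)
qed

lemma sin_ge_third:
  fixes x :: real
  assumes "0 \<le> x" "x \<le> pi/2"
  shows "x/3 \<le> sin x"
proof -
  define g where "g x = sin x - x + x^3/6" for x :: real
  have "g 0 \<le> g x"
  proof (rule DERIV_nonneg_imp_nondecreasing[OF assms(1)])
    fix t assume "0 \<le> t" "t \<le> x"
    have "DERIV g t :> cos t - 1 + t^2/2" unfolding g_def
      by (auto intro!: derivative_eq_intros simp: power2_eq_square)
    moreover have "0 \<le> cos t - 1 + t^2/2"
    proof -
      have e: "1 - cos t = 2 * sin (t/2) ^ 2" using cos_double_sin[of "t/2"] by simp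
      have "\<bar>sin (t/2)\<bar> \<le> \<bar>t/2\<bar>" by (rule abs_sin_x_le_abs_x)
      then have "sin (t/2) ^ 2 \<le> (t/2)^2" by (metis power2_abs abs_ge_zero power_mono)
      then show ?thesis using e by (simp add: power2_eq_square)
    qed
    ultimately show "\<exists>y. DERIV g t :> y \<and> 0 \<le> y" by blast
  qed
  then have a: "x - x^3/6 \<le> sin x" unfolding g_def by simp
  have "x \<le> 2" using assms pi_less_4 by linarith
  then have "x^2 \<le> 2^2" using assms(1) by (intro power_mono) auto
  then have "x^2 \<le> 4" by simp
  then have "x * x^2 \<le> x * 4" using assms(1) by (rule mult_left_mono)
  then have "x^3/6 \<le> 2*x/3" by (simp add: power3_eq_cube power2_eq_square)
  then show ?thesis using a by linarith
qed

lemma sq_le_36_sin_half_sq: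
  assumes "\<bar>u\<bar> \<le> pi"
  shows "u^2 \<le> 36 * sin (u/2)^2"
proof -
  define v where "v = \<bar>u\<bar>/2"
  have v: "0 \<le> v" "v \<le> pi/2" using assms unfolding v_def by auto
  have s: "v/3 \<le> sin v" by (rule sin_ge_third[OF v])
  have "sin v ^ 2 = sin (u/2) ^ 2"
    unfolding v_def by (cases "u \<ge> 0") (auto simp: abs_if)
  moreover have "(v/3)^2 \<le> sin v ^ 2" using s v by (intro power_mono) auto
  moreover have "u^2 = 36 * (v/3)^2" unfolding v_def by (simp add: power2_eq_square abs_mult_self)
  ultimately show ?thesis by linarith
qed

lemma reduce_mod_2pi: "\<exists>u' (k::int). \<bar>u'\<bar> \<le> pi \<and> u = u' + 2 * pi * of_int k"
proof -
  define k where "k = \<lfloor>u / (2*pi) + 1/2\<rfloor>"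
  have a: "of_int k \<le> u / (2*pi) + 1/2" "u / (2*pi) + 1/2 < of_int k + 1"
    unfolding k_def using floor_correct[of "u / (2*pi) + 1/2"] by auto
  have b: "2 * pi * of_int k \<le> u + pi" using a(1) pi_gt_zero by (simp add: field_simps)
  have c: "u - pi < 2 * pi * of_int k" using a(2) pi_gt_zero by (simp add: field_simps)
  show ?thesis by (rule exI[of _ "u - 2 * pi * of_int k"], rule exI[of _ k]) (use b c in auto)
qed

lemma sin_half_add_2pi_int_sq: "sin ((x + 2 * pi * of_int (k::int)) / 2) ^ 2 = sin (x/2) ^ 2"
proof -
  have e: "(x + 2 * pi * of_int k) / 2 = x/2 + pi * of_int k" by simp
  have "cos (pi * of_int k) ^ 2 = 1" using sin_cos_squared_add[of "pi * of_int k"] by simp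
  then show ?thesis unfolding e sin_add by (simp add: power_mult_distrib)
qed

lemma powr_add_le:
  fixes a b \<alpha> :: real
  assumes "0 \<le> a" "0 \<le> b" "0 < \<alpha>" "\<alpha> \<le> 1"
  shows "(a + b) powr \<alpha> \<le> a powr \<alpha> + b powr \<alpha>"
proof (cases "a = 0 \<or> b = 0")
  case True then show ?thesis by auto
next
  case False
  then have ab: "0 < a" "0 < b" using assms by auto
  have e: "x powr \<alpha> = x * x powr (\<alpha> - 1)" if "0 < x" for x :: real
    using powr_mult_base[of x "\<alpha> - 1"] that by simp
  have "a * (a + b) powr (\<alpha> - 1) \<le> a * a powr (\<alpha> - 1)"
    using ab assms by (intro mult_left_mono powr_mono2') auto
  moreover have "b * (a + b) powr (\<alpha> - 1) \<le> b * b powr (\<alpha> - 1)"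
    using ab assms by (intro mult_left_mono powr_mono2') auto
  ultimately have "a * (a + b) powr (\<alpha> - 1) + b * (a + b) powr (\<alpha> - 1) \<le> a * a powr (\<alpha> - 1) + b * b powr (\<alpha> - 1)"
    by (rule add_mono)
  then have "(a + b) * (a + b) powr (\<alpha> - 1) \<le> a powr \<alpha> + b powr \<alpha>"
    using e[OF ab(1)] e[OF ab(2)] by (simp only: distrib_right)
  then show ?thesis using e[of "a+b"] ab by simp
qed

lemma one_le_powr_nonpos:
  fixes p e :: real
  assumes "0 < p" "p \<le> 1" "e \<le> 0"
  shows "1 \<le> p powr e"
proof -
  have "p powr 0 \<le> p powr e" using powr_mono'[of e 0 p] assms by simp
  then show ?thesis using assms by simp
qed

lemma has_real_derivative_at_of_within_Ioc:
  assumes "(f has_real_derivative D) (at x within {a<..b})" "a < x" "x < b"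
  shows "(f has_real_derivative D) (at x)"
proof -
  have "(f has_real_derivative D) (at x within {a<..<b})"
    by (rule DERIV_subset[OF assms(1)]) auto
  then show ?thesis using at_within_open[of x "{a<..<b}"] assms(2,3) by auto
qed

lemma abs_diff_le_of_abs_deriv_le:
  fixes f g f' g' :: "real \<Rightarrow> real"
  assumes "a \<le> b" "continuous_on {a..b} f" "continuous_on {a..b} g"
    and f': "\<And>x. a < x \<Longrightarrow> x < b \<Longrightarrow> (f has_real_derivative f' x) (at x)"
    and g': "\<And>x. a < x \<Longrightarrow> x < b \<Longrightarrow> (g has_real_derivative g' x) (at x)"
    and le: "\<And>x. a < x \<Longrightarrow> x < b \<Longrightarrow> \<bar>f' x\<bar> \<le> g' x"
  shows "\<bar>f b - f a\<bar> \<le> g b - g a"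
proof -
  have "g a - f a \<le> g b - f b"
  proof (rule DERIV_nonneg_imp_increasing_open[OF assms(1)])
    fix x assume "a < x" "x < b"
    then show "\<exists>y. ((\<lambda>x. g x - f x) has_real_derivative y) (at x) \<and> 0 \<le> y"
      using f' g' le[of x] by (intro exI[of _ "g' x - f' x"]) (auto intro: DERIV_diff simp: abs_le_iff)
  qed (use assms(2,3) in \<open>intro continuous_intros\<close>)
  moreover have "g a + f a \<le> g b + f b"
  proof (rule DERIV_nonneg_imp_increasing_open[OF assms(1)])
    fix x assume "a < x" "x < b"
    then show "\<exists>y. ((\<lambda>x. g x + f x) has_real_derivative y) (at x) \<and> 0 \<le> y"
      using f' g' le[of x] by (intro exI[of _ "g' x + f' x"]) (auto intro: DERIV_add simp: abs_le_iff)
  qed (use assms(2,3) in \<open>intro continuous_intros\<close>)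
  ultimately show ?thesis by linarith
qed

locale singular_second_deriv =
  fixes \<alpha> A :: real and \<phi> \<phi>' \<phi>'' :: "real \<Rightarrow> real"
  assumes alpha: "0 < \<alpha>" "\<alpha> < 1" and A: "A > 0"
  and cont: "continuous_on {0..1} \<phi>"
  and d1: "\<forall>p\<in>{0<..1}. (\<phi> has_real_derivative \<phi>' p) (at p within {0<..1})"
  and d2: "\<forall>p\<in>{0<..1}. (\<phi>' has_real_derivative \<phi>'' p) (at p within {0<..1})"
  and b2: "\<forall>p\<in>{0<..1}. \<bar>\<phi>'' p\<bar> \<le> A * p powr (\<alpha> - 2)"
begin

definition "B = \<bar>\<phi>' 1\<bar> + A / (1 - \<alpha>)"
definition "K = B / \<alpha>"

lemma B_pos: "B > 0" unfolding B_def using A alpha by (simp add: add_nonneg_pos)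
lemma K_pos: "K > 0" unfolding K_def using B_pos alpha by simp

lemma deriv_at: "0 < p \<Longrightarrow> p < 1 \<Longrightarrow> (\<phi> has_real_derivative \<phi>' p) (at p)"
  using d1 by (intro has_real_derivative_at_of_within_Ioc) auto

lemma second_deriv_at: "0 < p \<Longrightarrow> p < 1 \<Longrightarrow> (\<phi>' has_real_derivative \<phi>'' p) (at p)"
  using d2 by (intro has_real_derivative_at_of_within_Ioc) auto

lemma continuous_on_deriv:
  assumes "0 < p"
  shows "continuous_on {p..1} \<phi>'"
proof -
  have "continuous (at x within {p..1}) \<phi>'" if "x \<in> {p..1}" for x
  proof -
    have "continuous (at x within {0<..1}) \<phi>'" using d2 that assms by (intro DERIV_continuous) auto
    then show ?thesis by (rule continuous_within_subset) (use assms in auto)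
  qed
  then show ?thesis using continuous_on_eq_continuous_within by blast
qed

lemma deriv_bound:
  assumes p: "0 < p" "p \<le> 1"
  shows "\<bar>\<phi>' p\<bar> \<le> B * p powr (\<alpha> - 1)"
proof -
  define w where "w x = A / (\<alpha> - 1) * x powr (\<alpha> - 1)" for x
  have "\<bar>\<phi>' 1 - \<phi>' p\<bar> \<le> w 1 - w p"
  proof (rule abs_diff_le_of_abs_deriv_le[OF p(2) continuous_on_deriv[OF p(1)]])
    show "continuous_on {p..1} w" unfolding w_def using p by (intro continuous_intros) auto
    fix x assume x: "p < x" "x < 1"
    then show "(\<phi>' has_real_derivative \<phi>'' x) (at x)" using p by (intro second_deriv_at) auto
    have "(w has_real_derivative A / (\<alpha> - 1) * ((\<alpha> - 1) * x powr (\<alpha> - 1 - 1))) (at x)"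
      unfolding w_def using x p by (intro DERIV_cmult has_real_derivative_powr) auto
    then show "(w has_real_derivative A * x powr (\<alpha> - 2)) (at x)" using alpha by simp
    show "\<bar>\<phi>'' x\<bar> \<le> A * x powr (\<alpha> - 2)" using b2 x p by simp
  qed
  moreover have "w 1 - w p = A / (1 - \<alpha>) * p powr (\<alpha> - 1) - A / (1 - \<alpha>)"
    using alpha by (simp add: w_def divide_simps) (simp add: algebra_simps)
  moreover have "0 \<le> A / (1 - \<alpha>)" using A alpha by simp
  moreover have "\<bar>\<phi>' 1\<bar> \<le> \<bar>\<phi>' 1\<bar> * p powr (\<alpha> - 1)"
    using one_le_powr_nonpos[of p "\<alpha> - 1"] p alpha by (simp add: mult_le_cancel_left1)
  ultimately show ?thesis unfolding B_def by (simp add: algebra_simps)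
qed

lemma holder_le:
  assumes xy: "0 \<le> x" "x \<le> y" "y \<le> 1"
  shows "\<bar>\<phi> y - \<phi> x\<bar> \<le> K * (y - x) powr \<alpha>"
proof -
  define w where "w s = K * s powr \<alpha>" for s
  have "\<bar>\<phi> y - \<phi> x\<bar> \<le> w y - w x"
  proof (rule abs_diff_le_of_abs_deriv_le[OF xy(2)])
    show "continuous_on {x..y} \<phi>" using cont by (rule continuous_on_subset) (use xy in auto)
    show "continuous_on {x..y} w" unfolding w_def using alpha xy
      by (intro continuous_intros continuous_on_powr') auto
    fix s assume s: "x < s" "s < y"
    then show "(\<phi> has_real_derivative \<phi>' s) (at s)" using xy by (intro deriv_at) auto
    have "(w has_real_derivative K * (\<alpha> * s powr (\<alpha> - 1))) (at s)"
      unfolding w_def using s xy by (intro DERIV_cmult has_real_derivative_powr) auto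
    then show "(w has_real_derivative B * s powr (\<alpha> - 1)) (at s)" unfolding K_def using alpha by simp
    show "\<bar>\<phi>' s\<bar> \<le> B * s powr (\<alpha> - 1)" using deriv_bound s xy by simp
  qed
  also have "w y - w x \<le> K * (y - x) powr \<alpha>"
    using powr_add_le[of x "y - x" \<alpha>] xy alpha K_pos
    by (simp add: w_def flip: right_diff_distrib)
  finally show ?thesis .
qed

lemma holder: assumes "x \<in> {0..1}" "y \<in> {0..1}" shows "\<bar>\<phi> y - \<phi> x\<bar> \<le> K * \<bar>y - x\<bar> powr \<alpha>"
proof (cases "x \<le> y")
  case True then show ?thesis using holder_le[of x y] assms by auto
next
  case False then show ?thesis using holder_le[of y x] assms by (auto simp: abs_minus_commute)
qed

end

lemma best_approx_err_le:
  fixes \<phi> :: "real \<Rightarrow> real" and q :: "real poly"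
  assumes "continuous_on {0..\<Delta>} \<phi>" "0 \<le> \<Delta>" "degree q \<le> L"
    and "\<forall>x\<in>{0..\<Delta>}. \<bar>\<phi> x - poly q x\<bar> \<le> E"
  shows "best_approx_err L \<phi> {0..\<Delta>} \<le> E"
proof -
  have bdd: "bdd_above ((\<lambda>x. \<bar>\<phi> x - poly q' x\<bar>) ` {0..\<Delta>})" for q' :: "real poly"
  proof -
    have "continuous_on {0..\<Delta>} (\<lambda>x. \<bar>\<phi> x - poly q' x\<bar>)" using assms(1) by (intro continuous_intros)
    then have "compact ((\<lambda>x. \<bar>\<phi> x - poly q' x\<bar>) ` {0..\<Delta>})" by (rule compact_continuous_image) simp
    then show ?thesis by (intro bounded_imp_bdd_above compact_imp_bounded)
  qed
  have "0 \<le> (SUP x\<in>{0..\<Delta>}. \<bar>\<phi> x - poly q' x\<bar>)" for q' :: "real poly"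
    using cSUP_upper[OF _ bdd, of 0 q'] assms(2) by (meson abs_ge_zero atLeastAtMost_iff order.refl order_trans)
  then have "bdd_below ((\<lambda>q. SUP x\<in>{0..\<Delta>}. \<bar>\<phi> x - poly q x\<bar>) ` {q. degree q \<le> L})"
    by (intro bdd_belowI2[where m = 0])
  then have "best_approx_err L \<phi> {0..\<Delta>} \<le> (SUP x\<in>{0..\<Delta>}. \<bar>\<phi> x - poly q x\<bar>)"
    unfolding best_approx_err_def by (rule cINF_lower) (use assms(3) in simp)
  also have "\<dots> \<le> E" by (rule cSUP_least) (use assms(2,4) in auto)
  finally show ?thesis .
qed

lemma best_approx_err_le_cos_poly:
  fixes \<phi> :: "real \<Rightarrow> real" and P :: "real poly"
  assumes "continuous_on {0..\<Delta>} \<phi>" "0 < \<Delta>" "degree P \<le> L"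
    and approx: "\<And>\<theta>. \<bar>poly P (cos \<theta>) - \<phi> (\<Delta> * (1 - cos \<theta>) / 2)\<bar> \<le> E"
  shows "best_approx_err L \<phi> {0..\<Delta>} \<le> E"
proof (rule best_approx_err_le[of \<Delta> \<phi> "pcompose P [:1, -2 / \<Delta>:]"])
  have "degree (pcompose P [:1, -2 / \<Delta>:]) \<le> degree P * degree [:1, -2 / \<Delta>:]"
    by (rule degree_pcompose_le)
  also have "\<dots> \<le> degree P * 1" by (intro mult_le_mono2) simp
  finally show "degree (pcompose P [:1, -2 / \<Delta>:]) \<le> L" using assms(3) by simp
  show "\<forall>x\<in>{0..\<Delta>}. \<bar>\<phi> x - poly (pcompose P [:1, -2 / \<Delta>:]) x\<bar> \<le> E"
  proof
    fix x assume x: "x \<in> {0..\<Delta>}"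
    define c where "c = 1 - 2 * x / \<Delta>"
    have "-1 \<le> c" "c \<le> 1" using x assms(2) by (auto simp: c_def field_simps)
    then have "cos (arccos c) = c" by simp
    moreover have "\<Delta> * (1 - c) / 2 = x" using assms(2) by (simp add: c_def field_simps)
    moreover have "poly (pcompose P [:1, -2 / \<Delta>:]) x = poly P c"
      by (simp add: c_def poly_pcompose algebra_simps)
    ultimately show "\<bar>\<phi> x - poly (pcompose P [:1, -2 / \<Delta>:]) x\<bar> \<le> E"
      using approx[of "arccos c"] by (simp add: abs_minus_commute)
  qed
qed (use assms in auto)

text \<open>
  \<open>F\<close> is \<open>\<phi>\<close> pulled back along x = \<Delta>(1 - cos \<theta>)/2. \<open>G\<close> evaluates \<open>\<phi>\<close> at \<open>y \<theta> \<in> [\<sigma>, \<Delta> - \<sigma>]\<close>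
  instead, away from the singularity at 0, so it is C^2 with derivatives \<open>G1\<close>, \<open>G2\<close>.
\<close>
locale shifted_substitution = singular_second_deriv +
  fixes \<Delta> \<sigma> :: real
  assumes sig: "0 < \<sigma>" "4 * \<sigma> \<le> \<Delta>" "\<Delta> \<le> 1"
begin

definition "y \<theta> = \<sigma> + (\<Delta> - 2*\<sigma>) * (1 - cos \<theta>) / 2"
definition "y' \<theta> = (\<Delta> - 2*\<sigma>) * sin \<theta> / 2"
definition "y'' \<theta> = (\<Delta> - 2*\<sigma>) * cos \<theta> / 2"
definition "G \<theta> = \<phi> (y \<theta>)"
definition "G1 \<theta> = \<phi>' (y \<theta>) * y' \<theta>"
definition "G2 \<theta> = \<phi>'' (y \<theta>) * y' \<theta> ^ 2 + \<phi>' (y \<theta>) * y'' \<theta>"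
definition "F \<theta> = \<phi> (\<Delta> * (1 - cos \<theta>) / 2)"
definition "M1 = B * \<Delta> * \<sigma> powr (\<alpha> - 1)"
definition "M2 = (A + B) * \<Delta> * \<sigma> powr (\<alpha> - 1)"

lemma M_nonneg: "0 \<le> M1" "0 \<le> M2"
  unfolding M1_def M2_def using B_pos A sig by auto

lemma y_range: "\<sigma> \<le> y \<theta>" "y \<theta> \<le> \<Delta> - \<sigma>"
proof -
  have c: "0 \<le> (1 - cos \<theta>)/2" "(1 - cos \<theta>)/2 \<le> 1" using cos_le_one[of \<theta>] cos_ge_minus_one[of \<theta>] by auto
  have D: "0 \<le> \<Delta> - 2*\<sigma>" using sig by simp
  have "0 \<le> (\<Delta> - 2*\<sigma>) * ((1 - cos \<theta>)/2)" using c D by simp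
  moreover have "(\<Delta> - 2*\<sigma>) * ((1 - cos \<theta>)/2) \<le> (\<Delta> - 2*\<sigma>) * 1" using c D by (intro mult_left_mono) auto
  ultimately show "\<sigma> \<le> y \<theta>" "y \<theta> \<le> \<Delta> - \<sigma>" unfolding y_def by auto
qed

lemma y_in: "0 < y \<theta>" "y \<theta> < 1"
  using y_range[of \<theta>] sig by auto

lemma DERIV_y: "DERIV y \<theta> :> y' \<theta>"
  unfolding y_def[abs_def] y'_def by (auto intro!: derivative_eq_intros)

lemma DERIV_y': "DERIV y' \<theta> :> y'' \<theta>"
  unfolding y'_def[abs_def] y''_def by (auto intro!: derivative_eq_intros)

lemma DERIV_G: "DERIV G \<theta> :> G1 \<theta>"
  unfolding G_def[abs_def] G1_def by (rule DERIV_chain'[OF DERIV_y deriv_at[OF y_in]])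

lemma DERIV_G1: "DERIV G1 \<theta> :> G2 \<theta>"
proof -
  have "DERIV (\<lambda>\<theta>. \<phi>' (y \<theta>)) \<theta> :> \<phi>'' (y \<theta>) * y' \<theta>"
    by (rule DERIV_chain'[OF DERIV_y second_deriv_at[OF y_in]])
  from DERIV_mult[OF this DERIV_y'] show ?thesis
    unfolding G1_def[abs_def] G2_def by (rule DERIV_cong) (simp add: power2_eq_square ac_simps)
qed

lemma deriv_phi_y_bound: "\<bar>\<phi>' (y \<theta>)\<bar> \<le> B * \<sigma> powr (\<alpha> - 1)"
proof -
  have "\<bar>\<phi>' (y \<theta>)\<bar> \<le> B * y \<theta> powr (\<alpha> - 1)" using deriv_bound y_in by (simp add: less_imp_le)
  also have "\<dots> \<le> B * \<sigma> powr (\<alpha> - 1)"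
    using y_range sig alpha B_pos by (intro mult_left_mono powr_mono2') auto
  finally show ?thesis .
qed

lemma abs_y'_le: "\<bar>y' \<theta>\<bar> \<le> \<Delta>" and abs_y''_le: "\<bar>y'' \<theta>\<bar> \<le> \<Delta>"
proof -
  have "\<bar>(\<Delta> - 2*\<sigma>) * t / 2\<bar> \<le> \<Delta>" if "\<bar>t\<bar> \<le> 1" for t
  proof -
    have "\<bar>(\<Delta> - 2*\<sigma>) * t / 2\<bar> = (\<Delta> - 2*\<sigma>) * \<bar>t\<bar> / 2" using sig by (simp add: abs_mult)
    also have "\<dots> \<le> (\<Delta> - 2*\<sigma>) * 1 / 2" using sig that by (intro divide_right_mono mult_left_mono) auto
    finally show ?thesis using sig by simp
  qed
  then show "\<bar>y' \<theta>\<bar> \<le> \<Delta>" "\<bar>y'' \<theta>\<bar> \<le> \<Delta>" by (simp_all add: y'_def y''_def)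
qed

lemma G1_bound: "\<bar>G1 \<theta>\<bar> \<le> M1"
proof -
  have "\<bar>G1 \<theta>\<bar> = \<bar>\<phi>' (y \<theta>)\<bar> * \<bar>y' \<theta>\<bar>" unfolding G1_def by (rule abs_mult)
  also have "\<dots> \<le> (B * \<sigma> powr (\<alpha> - 1)) * \<Delta>"
    using deriv_phi_y_bound abs_y'_le B_pos by (intro mult_mono) auto
  finally show ?thesis unfolding M1_def by (simp add: algebra_simps)
qed

lemma y'_sq_le: "y' \<theta> ^ 2 \<le> \<Delta> * y \<theta>"
proof -
  define D where "D = \<Delta> - 2*\<sigma>"
  define X where "X = D * (1 - cos \<theta>) / 2"
  define Y where "Y = (1 + cos \<theta>) / 2"
  have D: "0 \<le> D" "D \<le> \<Delta>" unfolding D_def using sig by auto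
  have Y: "0 \<le> Y" "Y \<le> 1"
    unfolding Y_def using cos_ge_minus_one[of \<theta>] by (intro divide_nonneg_pos; linarith) simp
  have X: "0 \<le> X" "X \<le> y \<theta>" unfolding X_def y_def D_def using sig cos_le_one[of \<theta>] by auto
  have "y' \<theta> ^ 2 = D^2 * sin \<theta> ^ 2 / 4"
    unfolding y'_def D_def by (simp add: power_divide power_mult_distrib)
  also have "sin \<theta> ^ 2 = (1 - cos \<theta>) * (1 + cos \<theta>)"
    using sin_cos_squared_add[of \<theta>] by (simp add: algebra_simps power2_eq_square)
  also have "D^2 * ((1 - cos \<theta>) * (1 + cos \<theta>)) / 4 = D * X * Y"
    unfolding X_def Y_def by (simp add: power2_eq_square field_simps)
  also have "\<dots> \<le> D * X * 1" using D X Y by (intro mult_left_mono) auto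
  also have "\<dots> \<le> \<Delta> * y \<theta>" using D X by (simp add: mult_mono)
  finally show ?thesis .
qed

lemma G2_bound: "\<bar>G2 \<theta>\<bar> \<le> M2"
proof -
  have "\<bar>\<phi>'' (y \<theta>) * y' \<theta> ^ 2\<bar> = \<bar>\<phi>'' (y \<theta>)\<bar> * y' \<theta> ^ 2" by (simp add: abs_mult)
  also have "\<dots> \<le> (A * y \<theta> powr (\<alpha> - 2)) * (\<Delta> * y \<theta>)"
    using b2 y_in y'_sq_le A by (intro mult_mono) (auto simp: less_imp_le)
  also have "\<dots> = A * \<Delta> * (y \<theta> * y \<theta> powr (\<alpha> - 2))" by (simp add: algebra_simps)
  also have "y \<theta> * y \<theta> powr (\<alpha> - 2) = y \<theta> powr (\<alpha> - 1)"
    using powr_mult_base[of "y \<theta>" "\<alpha> - 2"] y_in(1)[of \<theta>] by simp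
  also have "A * \<Delta> * y \<theta> powr (\<alpha> - 1) \<le> A * \<Delta> * \<sigma> powr (\<alpha> - 1)"
    using y_range sig alpha A by (intro mult_left_mono powr_mono2') auto
  finally have "\<bar>\<phi>'' (y \<theta>) * y' \<theta> ^ 2\<bar> \<le> A * \<Delta> * \<sigma> powr (\<alpha> - 1)" .
  moreover have "\<bar>\<phi>' (y \<theta>) * y'' \<theta>\<bar> \<le> (B * \<sigma> powr (\<alpha> - 1)) * \<Delta>"
    unfolding abs_mult using deriv_phi_y_bound abs_y''_le B_pos by (intro mult_mono) auto
  ultimately have "\<bar>G2 \<theta>\<bar> \<le> A * \<Delta> * \<sigma> powr (\<alpha> - 1) + B * \<sigma> powr (\<alpha> - 1) * \<Delta>"
    unfolding G2_def by (rule order_trans[OF abs_triangle_ineq add_mono])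
  then show ?thesis unfolding M2_def by (simp add: algebra_simps)
qed

lemma F_G_close: "\<bar>F \<theta> - G \<theta>\<bar> \<le> K * \<sigma> powr \<alpha>"
proof -
  have x1: "\<Delta> * (1 - cos \<theta>) / 2 \<in> {0..1}"
  proof -
    have c: "0 \<le> (1 - cos \<theta>)/2" "(1 - cos \<theta>)/2 \<le> 1" using cos_le_one[of \<theta>] cos_ge_minus_one[of \<theta>] by auto
    have "\<Delta> * ((1 - cos \<theta>)/2) \<le> 1 * 1" using c sig by (intro mult_mono) auto
    moreover have "0 \<le> \<Delta> * ((1 - cos \<theta>)/2)" using c sig by simp
    ultimately show ?thesis by simp
  qed
  have y1: "y \<theta> \<in> {0..1}" using y_in by (simp add: less_imp_le)
  have d: "\<bar>\<Delta> * (1 - cos \<theta>) / 2 - y \<theta>\<bar> \<le> \<sigma>"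
  proof -
    have "\<Delta> * (1 - cos \<theta>) / 2 - y \<theta> = - (\<sigma> * cos \<theta>)" unfolding y_def by (simp add: field_simps)
    then have "\<bar>\<Delta> * (1 - cos \<theta>) / 2 - y \<theta>\<bar> = \<sigma> * \<bar>cos \<theta>\<bar>" using sig by (simp add: abs_mult)
    also have "\<dots> \<le> \<sigma> * 1" using sig abs_cos_le_one[of \<theta>] by (intro mult_left_mono) auto
    finally show ?thesis by simp
  qed
  have "\<bar>F \<theta> - G \<theta>\<bar> \<le> K * \<bar>\<Delta> * (1 - cos \<theta>) / 2 - y \<theta>\<bar> powr \<alpha>"
    unfolding F_def G_def using holder[OF y1 x1] .
  also have "\<dots> \<le> K * \<sigma> powr \<alpha>"
    using d alpha K_pos by (intro mult_left_mono powr_mono2) auto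
  finally show ?thesis .
qed

lemma F_expansion:
  "\<bar>F (\<theta> + u) - F \<theta> - G1 \<theta> * sin u\<bar> \<le> 2 * K * \<sigma> powr \<alpha> + 36 * (M1 + M2) * sin (u/2)^2"
proof -
  obtain u' and k :: int where uk: "\<bar>u'\<bar> \<le> pi" "u = u' + 2 * pi * of_int k" using reduce_mod_2pi by blast
  have e1: "F (\<theta> + u) = F (\<theta> + u')" unfolding F_def uk(2) by (simp add: cos_add sin_add)
  have e2: "sin u = sin u'" unfolding uk(2) by (simp add: sin_add)
  have e3: "sin (u/2)^2 = sin (u'/2)^2" unfolding uk(2) by (rule sin_half_add_2pi_int_sq)
  have t1: "\<bar>F (\<theta> + u') - G (\<theta> + u')\<bar> \<le> K * \<sigma> powr \<alpha>" by (rule F_G_close)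
  have t2: "\<bar>F \<theta> - G \<theta>\<bar> \<le> K * \<sigma> powr \<alpha>" by (rule F_G_close)
  have t3: "\<bar>G (\<theta> + u') - G \<theta> - G1 \<theta> * u'\<bar> \<le> M2 * u'^2"
    by (rule taylor_second_order_bound[OF DERIV_G DERIV_G1 G2_bound])
  have t4: "\<bar>G1 \<theta> * (u' - sin u')\<bar> \<le> M1 * u'^2"
    unfolding abs_mult using G1_bound abs_minus_sin_le_sq[of u'] M_nonneg by (intro mult_mono) auto
  have t5: "u'^2 \<le> 36 * sin (u'/2)^2" by (rule sq_le_36_sin_half_sq[OF uk(1)])
  have "\<bar>F (\<theta> + u') - F \<theta> - G1 \<theta> * sin u'\<bar> \<le> 2 * K * \<sigma> powr \<alpha> + (M1 + M2) * u'^2"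
  proof -
    have "F (\<theta> + u') - F \<theta> - G1 \<theta> * sin u' = (F (\<theta> + u') - G (\<theta> + u')) - (F \<theta> - G \<theta>)
        + (G (\<theta> + u') - G \<theta> - G1 \<theta> * u') + G1 \<theta> * (u' - sin u')" by (simp add: algebra_simps)
    then show ?thesis using t1 t2 t3 t4 by (simp add: algebra_simps)
  qed
  also have "\<dots> \<le> 2 * K * \<sigma> powr \<alpha> + (M1 + M2) * (36 * sin (u'/2)^2)"
    using t5 M_nonneg by (intro add_left_mono mult_left_mono) auto
  finally show ?thesis unfolding e1 e2 e3 by (simp add: algebra_simps)
qed


lemma F_even: "F (- \<theta>) = F \<theta>"
  by (simp add: F_def)

lemma best_approx_err_le_sigma:
  assumes m: "0 < m" and \<Delta>: "\<Delta> = 4 * real m ^ 2 * \<sigma>" and L: "4 * (m - 1) \<le> L"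
  shows "best_approx_err L \<phi> {0..\<Delta>} \<le> (2 * K + 576 * (A + 2 * B)) * \<sigma> powr \<alpha>"
proof -
  have "4 * (36 * (M1 + M2)) / real m ^ 2 = 576 * (A + 2 * B) * (\<sigma> * \<sigma> powr (\<alpha> - 1))"
    unfolding M1_def M2_def using m by (simp add: \<Delta> field_simps)
  also have "\<sigma> * \<sigma> powr (\<alpha> - 1) = \<sigma> powr \<alpha>"
    using powr_mult_base[of \<sigma> "\<alpha> - 1"] sig by simp
  finally have E1: "4 * (36 * (M1 + M2)) / real m ^ 2 = 576 * (A + 2 * B) * \<sigma> powr \<alpha>" .
  have "\<bar>jackson_op m F \<theta> - F \<theta>\<bar> \<le> (2 * K + 576 * (A + 2 * B)) * \<sigma> powr \<alpha>" for \<theta>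
    using jackson_op_error[OF m _ F_expansion, of \<theta>] M_nonneg E1 by (simp add: algebra_simps)
  then obtain P where "degree P \<le> 4 * (m - 1)"
    and "\<forall>\<theta>. \<bar>poly P (cos \<theta>) - F \<theta>\<bar> \<le> (2 * K + 576 * (A + 2 * B)) * \<sigma> powr \<alpha>"
    using trig_poly_even_part_approx[OF trig_poly_jackson_op[of m F], of F] F_even by blast
  moreover have "continuous_on {0..\<Delta>} \<phi>" using cont by (rule continuous_on_subset) (use sig in auto)
  ultimately show ?thesis
    using sig L by (intro best_approx_err_le_cos_poly) (auto simp: F_def)
qed

end

lemma powr_le_scaled_small_degree:
  fixes \<Delta> \<alpha> :: real
  assumes "0 < \<Delta>" "0 < \<alpha>" "\<alpha> \<le> 1" "1 \<le> L" "L \<le> 3"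
  shows "\<Delta> powr \<alpha> \<le> 9 * (\<Delta> / real L ^ 2) powr \<alpha>"
proof -
  have L2: "1 \<le> real L ^ 2" "real L ^ 2 \<le> 9"
    using assms(4,5) power_mono[of "real L" 3 2] by auto
  have "(real L ^ 2) powr \<alpha> \<le> (real L ^ 2) powr 1"
    using L2 assms(3) by (intro powr_mono) auto
  then have "(real L ^ 2) powr \<alpha> \<le> 9" using L2 by simp
  moreover have "\<Delta> powr \<alpha> = (real L ^ 2) powr \<alpha> * (\<Delta> / real L ^ 2) powr \<alpha>"
    using assms(1,4) by (simp add: powr_divide)
  ultimately show ?thesis by (simp add: mult_right_mono)
qed

lemma powr_le_scaled_large_degree:
  fixes \<Delta> \<alpha> :: real
  assumes "0 < \<Delta>" "0 < \<alpha>" "\<alpha> \<le> 1" "4 \<le> L"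
  shows "(\<Delta> / (4 * real (L div 4) ^ 2)) powr \<alpha> \<le> 13 * (\<Delta> / real L ^ 2) powr \<alpha>"
proof -
  define m where "m = L div 4"
  have "0 < m" "L \<le> 7 * m" using assms(4) unfolding m_def by presburger+
  then have m: "0 < real m" "real L \<le> 7 * real m" by simp_all
  have "real L ^ 2 \<le> 49 * real m ^ 2"
    using power_mono[OF m(2), of 2] m by (simp add: power_mult_distrib)
  then have "real L ^ 2 \<le> 52 * real m ^ 2" using zero_le_power2[of "real m"] by linarith
  then have "\<Delta> / (4 * real m ^ 2) \<le> 13 * (\<Delta> / real L ^ 2)"
    using assms(1,4) m by (simp add: field_simps)
  then have "(\<Delta> / (4 * real m ^ 2)) powr \<alpha> \<le> (13 * (\<Delta> / real L ^ 2)) powr \<alpha>"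
    using assms(1,2) m by (intro powr_mono2) auto
  also have "\<dots> = 13 powr \<alpha> * (\<Delta> / real L ^ 2) powr \<alpha>"
    by (rule powr_mult)
  also have "\<dots> \<le> 13 * (\<Delta> / real L ^ 2) powr \<alpha>"
    using powr_mono[of \<alpha> 1 13] assms(3) by (intro mult_right_mono) auto
  finally show ?thesis unfolding m_def .
qed

context singular_second_deriv
begin

lemma best_approx_err_le_holder:
  assumes "0 < \<Delta>" "\<Delta> \<le> 1"
  shows "best_approx_err L \<phi> {0..\<Delta>} \<le> K * \<Delta> powr \<alpha>"
proof (rule best_approx_err_le[of \<Delta> \<phi> "[:\<phi> 0:]"])
  show "continuous_on {0..\<Delta>} \<phi>" using cont by (rule continuous_on_subset) (use assms in auto)
  show "\<forall>x\<in>{0..\<Delta>}. \<bar>\<phi> x - poly [:\<phi> 0:] x\<bar> \<le> K * \<Delta> powr \<alpha>"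
  proof
    fix x assume x: "x \<in> {0..\<Delta>}"
    have "\<bar>\<phi> x - \<phi> 0\<bar> \<le> K * \<bar>x - 0\<bar> powr \<alpha>" by (rule holder) (use x assms in auto)
    also have "\<dots> \<le> K * \<Delta> powr \<alpha>"
      using x alpha K_pos by (intro mult_left_mono powr_mono2) auto
    finally show "\<bar>\<phi> x - poly [:\<phi> 0:] x\<bar> \<le> K * \<Delta> powr \<alpha>" by simp
  qed
qed (use assms in auto)

lemma best_approx_err_small_degree:
  assumes \<Delta>: "0 < \<Delta>" "\<Delta> \<le> 1" and L: "1 \<le> L" "L \<le> 3"
  shows "best_approx_err L \<phi> {0..\<Delta>} \<le> 9 * K * (\<Delta> / (real L)^2) powr \<alpha>"
proof -
  have "best_approx_err L \<phi> {0..\<Delta>} \<le> K * \<Delta> powr \<alpha>"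
    using \<Delta> by (rule best_approx_err_le_holder)
  also have "\<dots> \<le> K * (9 * (\<Delta> / (real L)^2) powr \<alpha>)"
    using powr_le_scaled_small_degree[of \<Delta> \<alpha> L] \<Delta> L alpha K_pos by (intro mult_left_mono) auto
  finally show ?thesis by simp
qed

lemma best_approx_err_large_degree:
  assumes \<Delta>: "0 < \<Delta>" "\<Delta> \<le> 1" and L: "4 \<le> L"
  shows "best_approx_err L \<phi> {0..\<Delta>} \<le> 13 * (2 * K + 576 * (A + 2 * B)) * (\<Delta> / (real L)^2) powr \<alpha>"
proof -
  define m where "m = L div 4"
  define \<sigma> where "\<sigma> = \<Delta> / (4 * real m ^ 2)"
  have m: "0 < m" "4 * (m - 1) \<le> L" using L unfolding m_def by auto
  have \<sigma>: "0 < \<sigma>" "4 * \<sigma> \<le> \<Delta>" "\<Delta> = 4 * real m ^ 2 * \<sigma>"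
    using \<Delta> m(1) by (auto simp: \<sigma>_def field_simps intro: order_trans[of _ "\<Delta> * 1"])
  interpret shifted_substitution \<alpha> A \<phi> \<phi>' \<phi>'' \<Delta> \<sigma>
    using \<sigma> \<Delta> by unfold_locales auto
  have "best_approx_err L \<phi> {0..\<Delta>} \<le> (2 * K + 576 * (A + 2 * B)) * \<sigma> powr \<alpha>"
    by (rule best_approx_err_le_sigma[OF m(1) \<sigma>(3) m(2)])
  also have "\<dots> \<le> (2 * K + 576 * (A + 2 * B)) * (13 * (\<Delta> / (real L)^2) powr \<alpha>)"
    using powr_le_scaled_large_degree[of \<Delta> \<alpha> L] \<Delta> L alpha K_pos B_pos A
    unfolding \<sigma>_def m_def by (intro mult_left_mono) auto
  finally show ?thesis by (simp only: mult_ac)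
qed

theorem best_approx_err_le_scaled:
  "\<exists>C>0. \<forall>\<Delta>\<in>{0<..1}. \<forall>L::nat. L \<ge> 1 \<longrightarrow>
     best_approx_err L \<phi> {0..\<Delta>} \<le> C * (\<Delta> / (real L)^2) powr \<alpha>"
proof (intro exI conjI ballI allI impI)
  let ?C = "max (9 * K) (13 * (2 * K + 576 * (A + 2 * B)))"
  show "0 < ?C" using K_pos by simp
  fix \<Delta> :: real and L :: nat assume \<Delta>: "\<Delta> \<in> {0<..1}" and L: "1 \<le> L"
  have "best_approx_err L \<phi> {0..\<Delta>} \<le> 9 * K * (\<Delta> / (real L)^2) powr \<alpha>
      \<or> best_approx_err L \<phi> {0..\<Delta>} \<le> 13 * (2 * K + 576 * (A + 2 * B)) * (\<Delta> / (real L)^2) powr \<alpha>"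
    using best_approx_err_small_degree[of \<Delta> L] best_approx_err_large_degree[of \<Delta> L] \<Delta> L
    by (cases "L \<le> 3") auto
  then show "best_approx_err L \<phi> {0..\<Delta>} \<le> ?C * (\<Delta> / (real L)^2) powr \<alpha>"
    by (meson max.cobounded1 max.cobounded2 mult_right_mono order_trans powr_ge_zero)
qed

end

lemma le_powr_absorb_const:
  fixes p e x a c :: real
  assumes "0 < p" "p \<le> 1" "e \<le> 0" "x \<le> a * p powr e + c"
  shows "x \<le> (a + \<bar>c\<bar>) * p powr e"
proof -
  have "c \<le> \<bar>c\<bar> * 1" by simp
  also have "\<dots> \<le> \<bar>c\<bar> * p powr e"
    using one_le_powr_nonpos[OF assms(1-3)] by (intro mult_left_mono) auto
  finally show ?thesis using assms(4) by (simp add: distrib_right)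
qed

theorem lemma8:
  fixes \<alpha> W c c' :: real and \<phi> \<phi>' \<phi>'' :: "real \<Rightarrow> real"
  assumes alpha: "0 < \<alpha>" "\<alpha> < 1"
    and W: "W > 0"
    and nonneg: "\<forall>p\<in>{0..1}. \<phi> p \<ge> 0"
    and cont: "continuous_on {0..1} \<phi>"
    and d1: "\<forall>p\<in>{0<..1}. (\<phi> has_real_derivative \<phi>' p) (at p within {0<..1})"
    and d2: "\<forall>p\<in>{0<..1}. (\<phi>' has_real_derivative \<phi>'' p) (at p within {0<..1})"
    and c2: "continuous_on {0<..1} \<phi>''"
    and bounds: "\<forall>p\<in>{0<..1}. (2 - \<alpha>) * W * p powr (\<alpha> - 2) + c' \<le> \<bar>\<phi>'' p\<bar>
                          \<and> \<bar>\<phi>'' p\<bar> \<le> (2 - \<alpha>) * W * p powr (\<alpha> - 2) + c"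
  shows "\<exists>C>0. \<forall>\<Delta>\<in>{0<..1}. \<forall>L::nat. L \<ge> 1 \<longrightarrow>
           best_approx_err L \<phi> {0..\<Delta>} \<le> C * (\<Delta> / (real L)^2) powr \<alpha>"
proof -
  define A where "A = (2 - \<alpha>) * W + \<bar>c\<bar>"
  have "\<forall>p\<in>{0<..1}. \<bar>\<phi>'' p\<bar> \<le> A * p powr (\<alpha> - 2)"
    using bounds alpha unfolding A_def by (auto intro: le_powr_absorb_const)
  moreover have "A > 0" using W alpha by (simp add: A_def add_pos_nonneg)
  ultimately interpret singular_second_deriv \<alpha> A \<phi> \<phi>' \<phi>''
    using alpha cont d1 d2 by unfold_locales auto
  show ?thesis by (rule best_approx_err_le_scaled)
qed

end
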